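(* Let $X=\{1,\dots,k\}^{\mathbb N}$ with the shift $T$, let $\log p$ be a real Hölder continuous normalized potential with Gibbs state $\mu$, and let $H:X\to\mathbb R$ be a Hölder continuous positive function. For every $\beta\in\mathbb R$, let $\nu_\beta$ be the eigenprobability of $\mathcal L_{-\beta\log H}^*$. Then for every $\beta\in\mathbb R$, every $n\in\mathbb N$ and every continuous $f:X\to\mathbb C$, $$\int f\,d\nu_\beta=\int (\Lambda_n)^{-1}\,E_\mu(\Lambda_n f\mid \mathcal F_n)\,d\nu_\beta .$$
   Context: $X=\{1,\dots,k\}^{\mathbb N}$ with the product topology, $T$ the left shift (each point has exactly $k$ preimages). For continuous $A:X\to\mathbb R$ the Ruelle operator is $\mathcal L_A(f)(x)=\sum_{T(z)=x}e^{A(z)}f(z)$, and its dual acts on probabilities by $\int f\,d(\mathcal L_A^*\nu)=\int \mathcal L_A(f)\,d\nu$. The potential $\log p$ (with $p>0$ Hölder) is normalized: $\mathcal L_p(1)=\sum_{T(z)=x}p(z)=1$, where $\mathcal L_p:=\mathcal L_{\log p}$; $\mu$ is the probability with $\mathcal L_p^*\mu=\mu$. Write $\lambda=p^{-1}$, $\lambda^{[n]}(x)=\prod_{j=0}^{n-1}p(T^jx)^{-1}$, $H^{\beta[n]}(x)=\prod_{j=0}^{n-1}H(T^jx)^{\beta}$ and $\Lambda_n=H^{-\beta[n]}\lambda^{[n]}$. For Hölder positive $H$ and $\beta\in\mathbb R$, $\lambda_\beta>0$ denotes the largest eigenvalue of $\mathcal L_\beta:=\mathcal L_{-\beta\log H}$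 (so $\mathcal L_\beta f(x)=\sum_{T(z)=x}H(z)^{-\beta}f(z)$) and $\nu_\beta$ the unique probability with $\mathcal L_\beta^*\nu_\beta=\lambda_\beta\nu_\beta$. $\mathcal F_n=T^{-n}\mathcal B$ with $\mathcal B$ the Borel $\sigma$-algebra, and $E_\mu(f\mid\mathcal F_n)$ is the conditional expectation with respect to $\mu$; it equals $(\mathcal L_p^n f)\circ T^n$. *)

theory Defs
  imports "HOL-Probability.Probability"
begin

text \<open>The full shift on k symbols: sequences nat => nat with values in {1..k},
  carrying the product topology (the library topology on nat => nat, nat discrete).\<close>
definition shiftspace :: "nat \<Rightarrow> (nat \<Rightarrow> nat) set" where
  "shiftspace k = {x. \<forall>i. x i \<in> {1..k}}"

definition shift :: "(nat \<Rightarrow> nat) \<Rightarrow> (nat \<Rightarrow> nat)" where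
  "shift x = (\<lambda>i. x (Suc i))"

text \<open>The k preimages of x under the shift are the sequences a x, a in {1..k}.\<close>
definition scons :: "nat \<Rightarrow> (nat \<Rightarrow> nat) \<Rightarrow> (nat \<Rightarrow> nat)" where
  "scons a x = (\<lambda>i. case i of 0 \<Rightarrow> a | Suc j \<Rightarrow> x j)"

definition borelX :: "nat \<Rightarrow> (nat \<Rightarrow> nat) measure" where
  "borelX k = restrict_space borel (shiftspace k)"

definition sdist :: "(nat \<Rightarrow> nat) \<Rightarrow> (nat \<Rightarrow> nat) \<Rightarrow> real" where
  "sdist x y = (if x = y then 0 else (1/2) ^ (LEAST i. x i \<noteq> y i))"

definition holder :: "nat \<Rightarrow> ((nat \<Rightarrow> nat) \<Rightarrow> real) \<Rightarrow> bool" where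
  "holder k f \<longleftrightarrow> (\<exists>C \<alpha>. \<alpha> > 0 \<and>
     (\<forall>x\<in>shiftspace k. \<forall>y\<in>shiftspace k. \<bar>f x - f y\<bar> \<le> C * sdist x y powr \<alpha>))"

definition ruelle :: "nat \<Rightarrow> ((nat \<Rightarrow> nat) \<Rightarrow> real) \<Rightarrow> ((nat \<Rightarrow> nat) \<Rightarrow> 'b::real_algebra_1)
     \<Rightarrow> (nat \<Rightarrow> nat) \<Rightarrow> 'b" where
  "ruelle k A f x = (\<Sum>a\<in>{1..k}. of_real (exp (A (scons a x))) * f (scons a x))"

text \<open>L_A^* nu = c nu, via the definition of the dual action on continuous functions.\<close>
definition dual_eigen :: "nat \<Rightarrow> ((nat \<Rightarrow> nat) \<Rightarrow> real) \<Rightarrow> real \<Rightarrow> (nat \<Rightarrow> nat) measure \<Rightarrow> bool" where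
  "dual_eigen k A c \<nu> \<longleftrightarrow>
     (\<forall>g::(nat \<Rightarrow> nat) \<Rightarrow> real. continuous_on (shiftspace k) g \<longrightarrow>
        (\<integral>x. ruelle k A g x \<partial>\<nu>) = c * (\<integral>x. g x \<partial>\<nu>))"

text \<open>E_mu(g | F_n) = (L_p^n g) o T^n.\<close>
definition condexp :: "nat \<Rightarrow> ((nat \<Rightarrow> nat) \<Rightarrow> real) \<Rightarrow> nat
     \<Rightarrow> ((nat \<Rightarrow> nat) \<Rightarrow> 'b::real_algebra_1) \<Rightarrow> (nat \<Rightarrow> nat) \<Rightarrow> 'b" where
  "condexp k p n g x = ((ruelle k (\<lambda>z. ln (p z)) ^^ n) g) ((shift ^^ n) x)"

definition Lambda :: "((nat \<Rightarrow> nat) \<Rightarrow> real) \<Rightarrow> ((nat \<Rightarrow> nat) \<Rightarrow> real) \<Rightarrow> real \<Rightarrow> nat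
     \<Rightarrow> (nat \<Rightarrow> nat) \<Rightarrow> real" where
  "Lambda p H \<beta> n x = (\<Prod>j<n. H ((shift ^^ j) x) powr (-\<beta>)) * (\<Prod>j<n. 1 / p ((shift ^^ j) x))"

end

theory Submission
  imports Defs
begin

text \<open>
  Let L_beta be the Ruelle operator of -beta log H. Since p Lambda_1 = H^(-beta) and
  Lambda_(n+1) = Lambda_1 (Lambda_n o T), the weight Lambda_n intertwines the two operators:
  L_p^n (Lambda_n f) = L_beta^n f. So the right-hand integrand is g = (w o T^n) / Lambda_n with
  w = L_beta^n f, and pulling the T^n-invariant factor w o T^n out of L_beta^n and using the
  normalization L_p^n 1 = 1 gives L_beta^n g = w. As integrating L_beta^n u against nu multiplies
  the integral of u by lam^n, lam^n times either side of the claim equals the integral of w.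
\<close>

lemma scons_in_shiftspace: "a \<in> {1..k} \<Longrightarrow> x \<in> shiftspace k \<Longrightarrow> scons a x \<in> shiftspace k"
  by (auto simp: shiftspace_def scons_def split: nat.splits)

lemma shift_scons [simp]: "shift (scons a x) = x"
  by (simp add: shift_def scons_def)

lemma funpow_shift_in_shiftspace: "x \<in> shiftspace k \<Longrightarrow> (shift ^^ n) x \<in> shiftspace k"
  by (induction n) (auto simp: shiftspace_def shift_def)

lemma compact_shiftspace: "compact (shiftspace k)"
proof -
  have "shiftspace k = PiE UNIV (\<lambda>_. {1..k})"
    by (auto simp: shiftspace_def PiE_def extensional_def)
  moreover have "compactin (product_topology (\<lambda>_. euclidean) UNIV) (PiE UNIV (\<lambda>_::nat. {1..k::nat}))"
    by (simp add: compactin_PiE finite_imp_compact)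
  ultimately show ?thesis
    by (simp add: euclidean_product_topology)
qed

lemma continuous_on_shift: "continuous_on UNIV shift"
  unfolding shift_def by (intro continuous_on_coordinatewise_then_product) simp

lemma continuous_on_funpow_shift: "continuous_on UNIV (shift ^^ n)"
  by (induction n) (auto intro: continuous_on_compose2[OF continuous_on_shift])

lemma continuous_on_scons: "continuous_on UNIV (scons a)"
  unfolding scons_def
proof (intro continuous_on_coordinatewise_then_product)
  fix i show "continuous_on UNIV (\<lambda>x. case i of 0 \<Rightarrow> a | Suc j \<Rightarrow> x j)"
    by (cases i) auto
qed

lemma continuous_on_compose_scons:
  "a \<in> {1..k} \<Longrightarrow> continuous_on (shiftspace k) g \<Longrightarrow> continuous_on (shiftspace k) (\<lambda>x. g (scons a x))"
  by (rule continuous_on_compose2[OF _ continuous_on_subset[OF continuous_on_scons]])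
    (auto intro: scons_in_shiftspace)

lemma continuous_on_compose_funpow_shift:
  "continuous_on (shiftspace k) g \<Longrightarrow> continuous_on (shiftspace k) (\<lambda>x. g ((shift ^^ n) x))"
  by (rule continuous_on_compose2[OF _ continuous_on_subset[OF continuous_on_funpow_shift]])
    (auto simp: funpow_shift_in_shiftspace)

lemma open_cylinder: "open {y::nat \<Rightarrow> nat. \<forall>i<N. y i = x i}"
proof -
  have "{y::nat \<Rightarrow> nat. \<forall>i<N. y i = x i} = {y. \<forall>i\<in>{..<N}. y (id i) \<in> {x i}}"
    by auto
  then show ?thesis
    using product_topology_basis'[of "{..<N}" "\<lambda>i. {x i}" id] by (simp add: discrete_topology_class.open_discrete)
qed

lemma sdist_le_if_agree:
  assumes "\<forall>i<N. x i = y i" shows "sdist x y \<le> (1/2) ^ N"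
proof (cases "x = y")
  case False
  then obtain j where "x j \<noteq> y j" by blast
  then have "x (LEAST i. x i \<noteq> y i) \<noteq> y (LEAST i. x i \<noteq> y i)"
    by (rule LeastI)
  then have "N \<le> (LEAST i. x i \<noteq> y i)"
    using assms by (meson not_le)
  then show ?thesis
    using False by (simp add: sdist_def power_decreasing)
qed (simp add: sdist_def)

lemma holder_imp_continuous_on:
  assumes "holder k f" shows "continuous_on (shiftspace k) f"
proof -
  obtain C \<alpha> where "\<alpha> > 0" and hol:
    "\<forall>x\<in>shiftspace k. \<forall>y\<in>shiftspace k. \<bar>f x - f y\<bar> \<le> C * sdist x y powr \<alpha>"
    using assms unfolding holder_def by blast
  have "(1/2::real) powr \<alpha> < 1"
    using powr_less_mono'[of "1/2" 0 \<alpha>] \<open>\<alpha> > 0\<close> by simp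
  then have lim: "(\<lambda>N. \<bar>C\<bar> * ((1/2) powr \<alpha>) ^ N) \<longlonglongrightarrow> 0"
    by (intro tendsto_mult_right_zero LIMSEQ_power_zero) auto
  show ?thesis unfolding continuous_on_topological
  proof (intro ballI allI impI)
    fix x B assume x: "x \<in> shiftspace k" and "open B" "f x \<in> B"
    then obtain e where "e > 0" and e: "ball (f x) e \<subseteq> B"
      by (meson open_contains_ball)
    obtain N where N: "\<bar>C\<bar> * ((1/2) powr \<alpha>) ^ N < e"
      using order_tendstoD(2)[OF lim \<open>e > 0\<close>] by (meson eventually_sequentially order_refl)
    have "f y \<in> B" if y: "y \<in> shiftspace k" "\<forall>i<N. y i = x i" for y
    proof -
      have "sdist x y powr \<alpha> \<le> ((1/2) ^ N) powr \<alpha>"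
        using y \<open>\<alpha> > 0\<close> sdist_le_if_agree[of N x y] by (intro powr_mono2) (auto simp: sdist_def)
      also have "\<dots> = ((1/2) powr \<alpha>) ^ N"
        by (simp add: powr_power powr_realpow[symmetric] powr_powr mult.commute)
      finally have "\<bar>C\<bar> * sdist x y powr \<alpha> \<le> \<bar>C\<bar> * ((1/2) powr \<alpha>) ^ N"
        by (simp add: mult_left_mono)
      moreover have "C * sdist x y powr \<alpha> \<le> \<bar>C\<bar> * sdist x y powr \<alpha>"
        by (simp add: mult_right_mono)
      ultimately have "\<bar>f x - f y\<bar> \<le> \<bar>C\<bar> * ((1/2) powr \<alpha>) ^ N"
        using hol x y(1) by fastforce
      then show ?thesis
        using N e by (auto simp: dist_real_def)
    qed
    then show "\<exists>A. open A \<and> x \<in> A \<and> (\<forall>y\<in>shiftspace k. y \<in> A \<longrightarrow> f y \<in> B)"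
      by (intro exI[of _ "{y. \<forall>i<N. y i = x i}"]) (auto simp: open_cylinder)
  qed
qed

lemma space_eq_shiftspace: "sets \<nu> = sets (borelX k) \<Longrightarrow> space \<nu> = shiftspace k"
  using sets_eq_imp_space_eq[of \<nu> "borelX k"] by (simp add: borelX_def space_restrict_space)

lemma integrable_continuous_on_shiftspace:
  fixes g :: "(nat \<Rightarrow> nat) \<Rightarrow> 'b::{banach,second_countable_topology}"
  assumes "finite_measure \<nu>" "sets \<nu> = sets (borelX k)" "continuous_on (shiftspace k) g"
  shows "integrable \<nu> g"
proof -
  interpret finite_measure \<nu> by (rule assms(1))
  obtain B where "\<forall>x\<in>shiftspace k. norm (g x) \<le> B"
    using compact_imp_bounded[OF compact_continuous_image[OF assms(3) compact_shiftspace]]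
    by (auto simp: bounded_iff)
  moreover have "space \<nu> = shiftspace k"
    using assms(2) by (rule space_eq_shiftspace)
  moreover have "g \<in> borel_measurable \<nu>"
    unfolding measurable_cong_sets[OF assms(2) refl] borelX_def
    by (rule borel_measurable_continuous_on_restrict[OF assms(3)])
  ultimately show ?thesis
    by (intro integrable_const_bound[where B=B]) auto
qed

lemma continuous_on_ruelle:
  fixes g :: "(nat \<Rightarrow> nat) \<Rightarrow> 'b::real_normed_algebra_1"
  assumes "continuous_on (shiftspace k) A" "continuous_on (shiftspace k) g"
  shows "continuous_on (shiftspace k) (ruelle k A g)"
  unfolding ruelle_def by (intro continuous_intros continuous_on_compose_scons assms) auto

lemma continuous_on_funpow_ruelle:
  fixes g :: "(nat \<Rightarrow> nat) \<Rightarrow> 'b::real_normed_algebra_1"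
  assumes "continuous_on (shiftspace k) A" "continuous_on (shiftspace k) g"
  shows "continuous_on (shiftspace k) ((ruelle k A ^^ n) g)"
  by (induction n) (auto intro: continuous_on_ruelle assms)

lemma ruelle_cong:
  assumes "\<forall>z\<in>shiftspace k. g z = g' z" "x \<in> shiftspace k"
  shows "ruelle k A g x = ruelle k A g' x"
  unfolding ruelle_def using assms by (auto simp: scons_in_shiftspace intro!: sum.cong)

lemma funpow_ruelle_cong:
  assumes "\<forall>z\<in>shiftspace k. g z = g' z" "x \<in> shiftspace k"
  shows "(ruelle k A ^^ n) g x = (ruelle k A ^^ n) g' x"
  using assms(2) by (induction n arbitrary: x) (auto simp: assms(1) intro: ruelle_cong)

lemma ruelle_of_real: "ruelle k A (\<lambda>z. of_real (g z)) x = (of_real (ruelle k A g x) :: 'b::real_algebra_1)"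
  by (simp add: ruelle_def)

lemma Re_ruelle: "Re (ruelle k A g x) = ruelle k A (\<lambda>z. Re (g z)) x"
  by (simp add: ruelle_def)

lemma Im_ruelle: "Im (ruelle k A g x) = ruelle k A (\<lambda>z. Im (g z)) x"
  by (simp add: ruelle_def)

lemma ruelle_change_potential:
  "ruelle k A (\<lambda>z. of_real (exp (B z - A z)) * g z) x = ruelle k B g x"
  by (simp add: ruelle_def mult.assoc[symmetric] exp_diff flip: of_real_mult)

lemma ruelle_mult_shift:
  fixes g :: "(nat \<Rightarrow> nat) \<Rightarrow> 'b::real_algebra_1"
  shows "ruelle k A (\<lambda>z. g (shift z) * f z) x = g x * ruelle k A f x"
  unfolding ruelle_def sum_distrib_left
  by (simp add: mult.assoc[symmetric] flip: scaleR_conv_of_real mult_scaleR_right)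

lemma funpow_ruelle_mult_shift:
  fixes g :: "(nat \<Rightarrow> nat) \<Rightarrow> 'b::real_algebra_1"
  shows "(ruelle k A ^^ n) (\<lambda>z. g ((shift ^^ n) z) * f z) x = g x * (ruelle k A ^^ n) f x"
proof (induction n arbitrary: f)
  case (Suc n)
  have "ruelle k A (\<lambda>z. g ((shift ^^ Suc n) z) * f z) = (\<lambda>y. g ((shift ^^ n) y) * ruelle k A f y)"
    using ruelle_mult_shift[of k A "\<lambda>y. g ((shift ^^ n) y)" f]
    by (intro ext) (simp add: funpow_Suc_right del: funpow.simps)
  then show ?case
    using Suc.IH by (simp add: funpow_Suc_right del: funpow.simps)
qed simp

lemma funpow_ruelle_normalized:
  assumes "\<forall>y\<in>shiftspace k. ruelle k A (\<lambda>_. 1::real) y = 1" "x \<in> shiftspace k"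
  shows "(ruelle k A ^^ n) (\<lambda>_. 1::'b::real_algebra_1) x = 1"
  using assms(2)
proof (induction n arbitrary: x)
  case (Suc n)
  then have "(ruelle k A ^^ Suc n) (\<lambda>_. 1::'b) x = ruelle k A (\<lambda>_. of_real 1) x"
    by (auto intro: ruelle_cong)
  then show ?case
    using assms(1) Suc.prems by (simp only: ruelle_of_real) simp
qed simp

lemma dual_eigen_complex:
  fixes g :: "(nat \<Rightarrow> nat) \<Rightarrow> complex"
  assumes "dual_eigen k A c \<nu>" "finite_measure \<nu>" "sets \<nu> = sets (borelX k)"
    and "continuous_on (shiftspace k) A" "continuous_on (shiftspace k) g"
  shows "(\<integral>x. ruelle k A g x \<partial>\<nu>) = of_real c * (\<integral>x. g x \<partial>\<nu>)"
proof -
  have "continuous_on (shiftspace k) (\<lambda>x. Re (g x))" "continuous_on (shiftspace k) (\<lambda>x. Im (g x))"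
    by (intro continuous_intros assms(5))+
  moreover have "integrable \<nu> g" "integrable \<nu> (ruelle k A g)"
    using assms(2-5) by (auto intro: integrable_continuous_on_shiftspace continuous_on_ruelle)
  ultimately show ?thesis
    using assms(1)
    by (intro complex_eqI) (simp_all add: Re_ruelle Im_ruelle dual_eigen_def flip: integral_Re integral_Im)
qed

lemma dual_eigen_funpow:
  fixes g :: "(nat \<Rightarrow> nat) \<Rightarrow> complex"
  assumes "dual_eigen k A c \<nu>" "finite_measure \<nu>" "sets \<nu> = sets (borelX k)"
    and "continuous_on (shiftspace k) A" "continuous_on (shiftspace k) g"
  shows "(\<integral>x. (ruelle k A ^^ n) g x \<partial>\<nu>) = of_real c ^ n * (\<integral>x. g x \<partial>\<nu>)"
  by (induction n) (simp_all add: dual_eigen_complex[OF assms(1-4)] continuous_on_funpow_ruelle assms)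

lemma Lambda_Suc: "Lambda p H \<beta> (Suc n) z = Lambda p H \<beta> 1 z * Lambda p H \<beta> n (shift z)"
  unfolding Lambda_def prod.lessThan_Suc_shift funpow_Suc_right o_apply by simp

lemma Lambda_one_eq_exp:
  "p z > 0 \<Longrightarrow> H z > 0 \<Longrightarrow> Lambda p H \<beta> 1 z = exp (- \<beta> * ln (H z) - ln (p z))"
  by (simp add: Lambda_def powr_def exp_diff)

lemma Lambda_pos:
  assumes "\<forall>y\<in>shiftspace k. p y > 0" "\<forall>y\<in>shiftspace k. H y > 0" "x \<in> shiftspace k"
  shows "Lambda p H \<beta> n x > 0"
proof -
  have "H ((shift ^^ j) x) \<noteq> 0 \<and> p ((shift ^^ j) x) > 0" for j
    using assms(1,2) funpow_shift_in_shiftspace[OF assms(3)] by (metis less_irrefl)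
  then show ?thesis
    unfolding Lambda_def by (simp add: prod_pos)
qed

lemma continuous_on_Lambda:
  assumes "continuous_on (shiftspace k) p" "continuous_on (shiftspace k) H"
    and "\<forall>y\<in>shiftspace k. p y > 0" "\<forall>y\<in>shiftspace k. H y > 0"
  shows "continuous_on (shiftspace k) (Lambda p H \<beta> n)"
proof -
  have "continuous_on (shiftspace k) (\<lambda>x. H x powr (- \<beta>))"
    using assms(4) by (intro continuous_intros assms(2)) auto
  moreover have "continuous_on (shiftspace k) (\<lambda>x. 1 / p x)"
    using assms(3) by (intro continuous_intros assms(1)) auto
  ultimately show ?thesis
    unfolding Lambda_def by (intro continuous_on_mult continuous_on_prod continuous_on_compose_funpow_shift)
qed

lemma funpow_ruelle_Lambda:
  fixes f :: "(nat \<Rightarrow> nat) \<Rightarrow> 'b::real_algebra_1"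
  assumes p_pos: "\<forall>y\<in>shiftspace k. p y > 0" and H_pos: "\<forall>y\<in>shiftspace k. H y > 0"
    and "x \<in> shiftspace k"
  shows "(ruelle k (\<lambda>z. ln (p z)) ^^ n) (\<lambda>z. of_real (Lambda p H \<beta> n z) * f z) x
       = (ruelle k (\<lambda>z. - \<beta> * ln (H z)) ^^ n) f x"
  using assms(3)
proof (induction n arbitrary: f x)
  case 0
  then show ?case by (simp add: Lambda_def)
next
  case (Suc n)
  let ?Lp = "ruelle k (\<lambda>z. ln (p z))" and ?L\<beta> = "ruelle k (\<lambda>z. - \<beta> * ln (H z))"
  have step: "?Lp (\<lambda>z. of_real (Lambda p H \<beta> (Suc n) z) * f z) y = of_real (Lambda p H \<beta> n y) * ?L\<beta> f y"
    if "y \<in> shiftspace k" for y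
  proof -
    have "?Lp (\<lambda>z. of_real (Lambda p H \<beta> (Suc n) z) * f z) y
        = ?Lp (\<lambda>z. of_real (Lambda p H \<beta> n (shift z)) *
                    (of_real (exp (- \<beta> * ln (H z) - ln (p z))) * f z)) y"
    proof (intro ruelle_cong ballI that)
      fix z assume "z \<in> shiftspace k"
      then have "p z > 0" "H z > 0"
        using p_pos H_pos by auto
      then have "Lambda p H \<beta> (Suc n) z = Lambda p H \<beta> n (shift z) * exp (- \<beta> * ln (H z) - ln (p z))"
        by (simp only: Lambda_Suc Lambda_one_eq_exp mult.commute)
      then show "of_real (Lambda p H \<beta> (Suc n) z) * f z
          = of_real (Lambda p H \<beta> n (shift z)) * (of_real (exp (- \<beta> * ln (H z) - ln (p z))) * f z)"
        by (simp add: mult.assoc[symmetric] flip: of_real_mult)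
    qed
    also have "\<dots> = of_real (Lambda p H \<beta> n y) * ?L\<beta> f y"
      by (simp only: ruelle_mult_shift[where g = "\<lambda>y. of_real (Lambda p H \<beta> n y)"] ruelle_change_potential)
    finally show ?thesis .
  qed
  have "(?Lp ^^ Suc n) (\<lambda>z. of_real (Lambda p H \<beta> (Suc n) z) * f z) x
      = (?Lp ^^ n) (?Lp (\<lambda>z. of_real (Lambda p H \<beta> (Suc n) z) * f z)) x"
    by (simp add: funpow_Suc_right del: funpow.simps)
  also have "\<dots> = (?Lp ^^ n) (\<lambda>y. of_real (Lambda p H \<beta> n y) * ?L\<beta> f y) x"
    using Suc.prems step by (intro funpow_ruelle_cong) auto
  also have "\<dots> = (?L\<beta> ^^ Suc n) f x"
    using Suc by (simp add: funpow_Suc_right del: funpow.simps)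
  finally show ?case .
qed

lemma funpow_ruelle_inverse_Lambda_shift:
  fixes w :: "(nat \<Rightarrow> nat) \<Rightarrow> 'b::real_algebra_1"
  assumes p_pos: "\<forall>y\<in>shiftspace k. p y > 0" and H_pos: "\<forall>y\<in>shiftspace k. H y > 0"
    and p_norm: "\<forall>y\<in>shiftspace k. ruelle k (\<lambda>z. ln (p z)) (\<lambda>_. 1::real) y = 1"
    and "x \<in> shiftspace k"
  shows "(ruelle k (\<lambda>z. - \<beta> * ln (H z)) ^^ n)
           (\<lambda>z. of_real (1 / Lambda p H \<beta> n z) * w ((shift ^^ n) z)) x = w x"
proof -
  let ?Lp = "ruelle k (\<lambda>z. ln (p z))"
  have "(ruelle k (\<lambda>z. - \<beta> * ln (H z)) ^^ n)
           (\<lambda>z. of_real (1 / Lambda p H \<beta> n z) * w ((shift ^^ n) z)) x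
      = (?Lp ^^ n) (\<lambda>z. of_real (Lambda p H \<beta> n z) *
                         (of_real (1 / Lambda p H \<beta> n z) * w ((shift ^^ n) z))) x"
    by (rule funpow_ruelle_Lambda[OF p_pos H_pos assms(4), symmetric])
  also have "\<dots> = (?Lp ^^ n) (\<lambda>z. w ((shift ^^ n) z) * 1) x"
  proof (intro funpow_ruelle_cong ballI assms(4))
    fix z assume "z \<in> shiftspace k"
    then have "Lambda p H \<beta> n z \<noteq> 0"
      using Lambda_pos[OF p_pos H_pos] by (metis less_irrefl)
    then show "of_real (Lambda p H \<beta> n z) * (of_real (1 / Lambda p H \<beta> n z) * w ((shift ^^ n) z))
             = w ((shift ^^ n) z) * 1"
      by (simp add: mult.assoc[symmetric] flip: of_real_mult)
  qed
  also have "\<dots> = w x * (?Lp ^^ n) (\<lambda>_. 1) x"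
    by (rule funpow_ruelle_mult_shift)
  also have "\<dots> = w x"
    by (simp add: funpow_ruelle_normalized[OF p_norm assms(4)])
  finally show ?thesis .
qed

lemma integral_inverse_Lambda_shift:
  fixes w :: "(nat \<Rightarrow> nat) \<Rightarrow> complex"
  assumes p_pos: "\<forall>y\<in>shiftspace k. p y > 0" and H_pos: "\<forall>y\<in>shiftspace k. H y > 0"
    and p_norm: "\<forall>y\<in>shiftspace k. ruelle k (\<lambda>z. ln (p z)) (\<lambda>_. 1::real) y = 1"
    and p_cont: "continuous_on (shiftspace k) p" and H_cont: "continuous_on (shiftspace k) H"
    and "finite_measure \<nu>" and \<nu>_sets: "sets \<nu> = sets (borelX k)"
    and eigen: "dual_eigen k (\<lambda>z. - \<beta> * ln (H z)) c \<nu>" and "c \<noteq> 0"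
    and w_cont: "continuous_on (shiftspace k) w"
  shows "(\<integral>x. of_real (1 / Lambda p H \<beta> n x) * w ((shift ^^ n) x) \<partial>\<nu>) = (\<integral>x. w x \<partial>\<nu>) / of_real c ^ n"
proof -
  define h where "h = (\<lambda>x. of_real (1 / Lambda p H \<beta> n x) * w ((shift ^^ n) x))"
  have "continuous_on (shiftspace k) (\<lambda>x. complex_of_real (1 / Lambda p H \<beta> n x))"
    using Lambda_pos[OF p_pos H_pos]
    by (intro continuous_intros continuous_on_Lambda p_cont H_cont p_pos H_pos) (metis less_irrefl)
  then have "continuous_on (shiftspace k) h"
    unfolding h_def by (intro continuous_on_mult continuous_on_compose_funpow_shift w_cont)
  moreover have "continuous_on (shiftspace k) (\<lambda>z. - \<beta> * ln (H z))"
    using H_pos by (intro continuous_intros H_cont) auto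
  ultimately have "of_real c ^ n * (\<integral>x. h x \<partial>\<nu>) = (\<integral>x. (ruelle k (\<lambda>z. - \<beta> * ln (H z)) ^^ n) h x \<partial>\<nu>)"
    using dual_eigen_funpow[OF eigen \<open>finite_measure \<nu>\<close> \<nu>_sets] by simp
  also have "\<dots> = (\<integral>x. w x \<partial>\<nu>)"
  proof (rule Bochner_Integration.integral_cong[OF refl])
    fix x assume "x \<in> space \<nu>"
    then show "(ruelle k (\<lambda>z. - \<beta> * ln (H z)) ^^ n) h x = w x"
      unfolding h_def space_eq_shiftspace[OF \<nu>_sets]
      by (rule funpow_ruelle_inverse_Lambda_shift[OF p_pos H_pos p_norm])
  qed
  finally show ?thesis
    using \<open>c \<noteq> 0\<close> by (simp add: h_def field_simps)
qed

theorem lemma1p1: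
  fixes k :: nat and p H :: "(nat \<Rightarrow> nat) \<Rightarrow> real" and \<mu> \<nu> :: "(nat \<Rightarrow> nat) measure"
    and \<beta> lam :: real and n :: nat and f :: "(nat \<Rightarrow> nat) \<Rightarrow> complex"
  assumes p_pos: "\<forall>x\<in>shiftspace k. p x > 0"
    and p_holder: "holder k p"
    and p_norm: "\<forall>x\<in>shiftspace k. ruelle k (\<lambda>z. ln (p z)) (\<lambda>_. 1::real) x = 1"
    and mu_prob: "prob_space \<mu>" and mu_sets: "sets \<mu> = sets (borelX k)"
    and mu_gibbs: "dual_eigen k (\<lambda>z. ln (p z)) 1 \<mu>"
    and H_pos: "\<forall>x\<in>shiftspace k. H x > 0"
    and H_holder: "holder k H"
    and lam_pos: "lam > 0"
    and nu_prob: "prob_space \<nu>" and nu_sets: "sets \<nu> = sets (borelX k)"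
    and nu_eigen: "dual_eigen k (\<lambda>z. - \<beta> * ln (H z)) lam \<nu>"
    and f_cont: "continuous_on (shiftspace k) f"
  shows "(\<integral>x. f x \<partial>\<nu>) =
         (\<integral>x. of_real (1 / Lambda p H \<beta> n x) *
               condexp k p n (\<lambda>z. of_real (Lambda p H \<beta> n z) * f z) x \<partial>\<nu>)"
proof -
  \<comment> \<open>\<mu> enters only through the formula defining \<open>condexp\<close>.\<close>
  have H_cont: "continuous_on (shiftspace k) H" and p_cont: "continuous_on (shiftspace k) p"
    using H_holder p_holder by (simp_all add: holder_imp_continuous_on)
  have A_cont: "continuous_on (shiftspace k) (\<lambda>z. - \<beta> * ln (H z))"
    using H_pos by (intro continuous_intros H_cont) auto
  have "finite_measure \<nu>"
    using nu_prob by (simp add: prob_space_def)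
  let ?w = "(ruelle k (\<lambda>z. - \<beta> * ln (H z)) ^^ n) f"
  have "(\<integral>x. of_real (1 / Lambda p H \<beta> n x) *
               condexp k p n (\<lambda>z. of_real (Lambda p H \<beta> n z) * f z) x \<partial>\<nu>)
      = (\<integral>x. of_real (1 / Lambda p H \<beta> n x) * ?w ((shift ^^ n) x) \<partial>\<nu>)"
    unfolding condexp_def using space_eq_shiftspace[OF nu_sets]
    by (intro Bochner_Integration.integral_cong refl arg_cong2[where f = "(*)"]
        funpow_ruelle_Lambda[OF p_pos H_pos] funpow_shift_in_shiftspace) simp
  also have "\<dots> = (\<integral>x. ?w x \<partial>\<nu>) / of_real lam ^ n"
    using lam_pos continuous_on_funpow_ruelle[OF A_cont f_cont]
    by (intro integral_inverse_Lambda_shift[OF p_pos H_pos p_norm p_cont H_cont \<open>finite_measure \<nu>\<close>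
        nu_sets nu_eigen]) auto
  also have "\<dots> = (\<integral>x. f x \<partial>\<nu>)"
    unfolding dual_eigen_funpow[OF nu_eigen \<open>finite_measure \<nu>\<close> nu_sets A_cont f_cont]
    using lam_pos by simp
  finally show ?thesis ..
qed

end
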